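(* Assume $C\succ 0$. Let $X\succ 0$ be linearly feasible, i.e. $\mathcal{A}\,\mathrm{vec}(X)=b$, and suppose that $X$ is an equilibrium of the first-ansatz dynamics, i.e. $$v_1(X):=G\mathcal{A}^T(\mathcal{A}G\mathcal{A}^T)^\dagger\mathcal{A}\,\mathrm{vec}(X) - \mathrm{vec}(X) = 0,\qquad G=\tfrac12\bigl(C^{-1}\otimes X + X\otimes C^{-1}\bigr).$$ Then $X$ is an optimal solution of the SDP $\min\{\mathrm{tr}(CX): \mathrm{tr}(A_\ell X)=b_\ell\ \forall\ell\in[m],\ X\succeq 0\}$.
   Context: $C,A_1,\dots,A_m$ are symmetric $n\times n$ matrices and $b\in\mathbb{R}^m$. For an $n\times n$ matrix $M$, $\mathrm{vec}(M)\in\mathbb{R}^{n^2}$ is obtained by stacking the columns of $M$; $\otimes$ is the Kronecker product, with $\mathrm{vec}(ABC)=(C^T\otimes A)\mathrm{vec}(B)$ (so $G\,\mathrm{vec}(C)=\mathrm{vec}(X)$). $\mathcal{A}$ is the $m\times n^2$ matrix whose $\ell$-th row is $\mathrm{vec}(A_\ell)^T$. $\dagger$ is the Moore–Penrose pseudo-inverse. *)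

theory Defs
  imports "HOL-Analysis.Analysis"
begin

definition sym_mat :: "real^'n^'n \<Rightarrow> bool" where
  "sym_mat M \<longleftrightarrow> transpose M = M"

definition pos_def :: "real^'n^'n \<Rightarrow> bool" where
  "pos_def M \<longleftrightarrow> sym_mat M \<and> (\<forall>x. x \<noteq> 0 \<longrightarrow> x \<bullet> (M *v x) > 0)"

definition psd :: "real^'n^'n \<Rightarrow> bool" where
  "psd M \<longleftrightarrow> sym_mat M \<and> (\<forall>x. x \<bullet> (M *v x) \<ge> 0)"

text \<open>vec: R^{n x n} -> R^{n^2}; the coordinate (i,j) of vec M is M_ij (column stacking
  corresponds to ordering the index pairs (i,j) by j first, then i).\<close>
definition vecm :: "real^'n^'n \<Rightarrow> real^('n \<times> 'n)" where
  "vecm M = (\<chi> p. M $ fst p $ snd p)"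

text \<open>Kronecker product P \<otimes> Q, entry at ((i,j),(k,l)) is P_jl * Q_ik, so that
  (C^T \<otimes> A) vec(B) = vec(A B C).\<close>
definition kron :: "real^'n^'n \<Rightarrow> real^'n^'n \<Rightarrow> real^('n \<times> 'n)^('n \<times> 'n)" where
  "kron P Q = (\<chi> p q. P $ snd p $ snd q * Q $ fst p $ fst q)"

definition mp_pinv :: "real^'m^'m \<Rightarrow> real^'m^'m" where
  "mp_pinv M = (THE P. M ** P ** M = M \<and> P ** M ** P = P \<and>
      transpose (M ** P) = M ** P \<and> transpose (P ** M) = P ** M)"

definition constr_mat :: "('m::finite \<Rightarrow> real^'n^'n) \<Rightarrow> real^('n \<times> 'n)^'m" where
  "constr_mat A = (\<chi> l. vecm (A l))"

definition Gmat :: "real^'n^'n \<Rightarrow> real^'n^'n \<Rightarrow> real^('n \<times> 'n)^('n \<times> 'n)" where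
  "Gmat C X = (1/2) *\<^sub>R (kron (matrix_inv C) X + kron X (matrix_inv C))"

definition v1 :: "real^'n^'n \<Rightarrow> ('m::finite \<Rightarrow> real^'n^'n) \<Rightarrow> real^'n^'n \<Rightarrow> real^('n \<times> 'n)" where
  "v1 C A X = (let G = Gmat C X; AA = constr_mat A in
     (G ** transpose AA ** mp_pinv (AA ** G ** transpose AA) ** AA) *v vecm X - vecm X)"

definition sdp_feasible :: "('m::finite \<Rightarrow> real^'n^'n) \<Rightarrow> real^'m \<Rightarrow> real^'n^'n \<Rightarrow> bool" where
  "sdp_feasible A b Y \<longleftrightarrow> (\<forall>l. trace (A l ** Y) = b $ l) \<and> psd Y"

definition sdp_optimal :: "real^'n^'n \<Rightarrow> ('m::finite \<Rightarrow> real^'n^'n) \<Rightarrow> real^'m \<Rightarrow> real^'n^'n \<Rightarrow> bool" where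
  "sdp_optimal C A b X \<longleftrightarrow> sdp_feasible A b X \<and>
     (\<forall>Y. sdp_feasible A b Y \<longrightarrow> trace (C ** X) \<le> trace (C ** Y))"

end

theory Submission
  imports Defs
begin

text \<open>At an equilibrium, \<open>G vec(S) = vec(X)\<close> for \<open>S = \<Sum>\<^sub>l y\<^sub>l A\<^sub>l\<close>, where \<open>y\<close> is the vector
  produced by the pseudo-inverse (none of its Penrose properties is needed). Unfolding the
  Kronecker products gives \<open>2X = X S C\<inverse> + C\<inverse> S X\<close>, and multiplying by \<open>C\<close> on both sides
  turns this into the Lyapunov-type equation \<open>C X D + D X C = 0\<close> for the symmetric matrix
  \<open>D = S - C\<close>. Testing it against an extremal generalized eigenvector of \<open>X D X\<close> relative to
  \<open>X\<close> shows that all these eigenvalues vanish, so \<open>D = 0\<close>. Hence \<open>C\<close> lies in the span of the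
  constraint matrices, the objective \<open>tr(C Y) = b\<^sup>T y\<close> is constant on the feasible set, and the
  feasible matrix \<open>X\<close> is optimal.\<close>

lemma sym_mat_inner_commute: "sym_mat M \<Longrightarrow> x \<bullet> (M *v y) = (M *v x) \<bullet> y"
  by (metis dot_lmul_matrix sym_mat_def vector_transpose_matrix)

lemma pos_def_sym_mat: "pos_def M \<Longrightarrow> sym_mat M"
  unfolding pos_def_def by blast

lemma pos_def_psd: "pos_def M \<Longrightarrow> psd M"
  unfolding pos_def_def psd_def by (metis inner_zero_left order_le_less)

lemma pos_def_mult_eq_0: "pos_def M \<Longrightarrow> M *v x = 0 \<Longrightarrow> x = 0"
  unfolding pos_def_def by force

lemma pos_def_matrix_inv:
  assumes "pos_def M"
  shows "matrix_inv M ** M = mat 1" "M ** matrix_inv M = mat 1"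
proof -
  have "invertible M"
    using pos_def_mult_eq_0[OF assms] invertible_left_inverse matrix_left_invertible_ker by blast
  then have "M ** matrix_inv M = mat 1 \<and> matrix_inv M ** M = mat 1"
    unfolding matrix_inv_def invertible_def by (rule someI_ex)
  then show "matrix_inv M ** M = mat 1" "M ** matrix_inv M = mat 1" by auto
qed

lemma sym_mat_uminus: "sym_mat M \<Longrightarrow> sym_mat (- M)"
  unfolding sym_mat_def by (simp add: transpose_def vec_eq_iff)

lemma sym_mat_diff: "sym_mat M \<Longrightarrow> sym_mat N \<Longrightarrow> sym_mat (M - N)"
  unfolding sym_mat_def by (simp add: transpose_def vec_eq_iff)

lemma sym_mat_congruence: "sym_mat X \<Longrightarrow> sym_mat D \<Longrightarrow> sym_mat (X ** D ** X)"
  unfolding sym_mat_def by (simp add: matrix_transpose_mul matrix_mul_assoc)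

lemma sym_mat_sum_scaleR: "(\<And>l. sym_mat (A l)) \<Longrightarrow> sym_mat (\<Sum>l\<in>UNIV. y $ l *\<^sub>R A l)"
  unfolding sym_mat_def by (simp add: transpose_def vec_eq_iff sum_component)

lemma matrix_mul_uminus_left: "(- A :: real^'n^'n) ** B = - (A ** B)"
  by (simp add: matrix_matrix_mult_def vec_eq_iff sum_negf)

lemma matrix_mul_uminus_right: "(A :: real^'n^'n) ** (- B) = - (A ** B)"
  by (simp add: matrix_matrix_mult_def vec_eq_iff sum_negf)

lemma matrix_diff_ldistrib: "(A :: real^'n^'n) ** (B - C) = A ** B - A ** C"
  by (simp add: matrix_matrix_mult_def vec_eq_iff sum_subtractf ring_distribs)

lemma matrix_diff_rdistrib: "((B :: real^'n^'n) - C) ** A = B ** A - C ** A"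
  by (simp add: matrix_matrix_mult_def vec_eq_iff sum_subtractf ring_distribs)

lemma matrix_add_rdistrib: "((B :: real^'n^'n) + C) ** A = B ** A + C ** A"
  by (simp add: matrix_matrix_mult_def vec_eq_iff sum.distrib ring_distribs)

lemma sym_mat_eq_0_if_quadratic_form_0:
  assumes "sym_mat M" "\<And>u. u \<bullet> (M *v u) = 0"
  shows "M = 0"
proof -
  have "u \<bullet> (M *v w) = 0" for u w
  proof -
    have "(u + w) \<bullet> (M *v (u + w)) = 0" by (rule assms(2))
    then have "u \<bullet> (M *v w) + w \<bullet> (M *v u) = 0"
      using assms(2) by (simp add: matrix_vector_right_distrib inner_add_left inner_add_right)
    moreover have "w \<bullet> (M *v u) = u \<bullet> (M *v w)"
      using sym_mat_inner_commute[OF assms(1)] by (simp add: inner_commute)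
    ultimately show ?thesis by simp
  qed
  then have "M *v w = 0" for w by (metis inner_eq_zero_iff)
  then show ?thesis by (metis matrix_eq matrix_vector_mult_0)
qed

lemma linear_coeff_eq_0_if_quadratic_nonpos:
  fixes a c :: real
  assumes "\<And>t. 2 * t * a + t\<^sup>2 * c \<le> 0"
  shows "a = 0"
proof -
  define k where "k = 1 + \<bar>c\<bar>"
  have k: "k > 0" "2 * k + c > 0" unfolding k_def by (auto simp: abs_if)
  have "(2 * (a / k) * a + (a / k)\<^sup>2 * c) * k\<^sup>2 = a\<^sup>2 * (2 * k + c)"
    using k by (simp add: field_simps power2_eq_square)
  moreover have "(2 * (a / k) * a + (a / k)\<^sup>2 * c) * k\<^sup>2 \<le> 0"
    using assms[of "a / k"] by (simp add: mult_nonpos_nonneg)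
  ultimately have "a\<^sup>2 \<le> 0" using k(2) by (metis mult_le_0_iff not_le power2_less_0)
  then show ?thesis by simp
qed

text \<open>A maximiser of a negative semidefinite quadratic form lies in the kernel: perturbing
  \<open>v\<close> in the direction \<open>M v\<close> changes the form by \<open>2t|M v|\<^sup>2 + O(t\<^sup>2)\<close>.\<close>
lemma nsd_quadratic_form_eq_0_imp_kernel:
  assumes sym: "sym_mat M" and nsd: "\<And>u. u \<bullet> (M *v u) \<le> 0" and v: "v \<bullet> (M *v v) = 0"
  shows "M *v v = 0"
proof -
  define w where "w = M *v v"
  have "2 * t * (w \<bullet> w) + t\<^sup>2 * (w \<bullet> (M *v w)) \<le> 0" for t
  proof -
    have "(v + t *\<^sub>R w) \<bullet> (M *v (v + t *\<^sub>R w))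
        = v \<bullet> (M *v v) + t * (v \<bullet> (M *v w)) + t * (w \<bullet> (M *v v)) + t\<^sup>2 * (w \<bullet> (M *v w))"
      by (simp add: matrix_vector_right_distrib matrix_vector_mult_scaleR inner_add_left
          inner_add_right power2_eq_square algebra_simps)
    moreover have "v \<bullet> (M *v w) = w \<bullet> w"
      using sym_mat_inner_commute[OF sym] unfolding w_def by simp
    ultimately show ?thesis
      using nsd[of "v + t *\<^sub>R w"] v unfolding w_def by simp
  qed
  then have "w \<bullet> w = 0" by (rule linear_coeff_eq_0_if_quadratic_nonpos)
  then show ?thesis unfolding w_def by simp
qed

text \<open>\<open>lam\<close> is the maximum of the generalized Rayleigh quotient \<open>u\<^sup>T B u / u\<^sup>T X u\<close>,
  attained on the compact unit sphere; the eigen-equation is the first-order condition.\<close>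
lemma generalized_rayleigh_max:
  fixes B X :: "real^'n^'n"
  assumes "sym_mat B" "pos_def X"
  obtains v lam where "v \<noteq> 0" "B *v v = lam *\<^sub>R (X *v v)"
    "\<And>u. u \<bullet> (B *v u) \<le> lam * (u \<bullet> (X *v u))"
proof -
  define f where "f u = (u \<bullet> (B *v u)) / (u \<bullet> (X *v u))" for u
  have X_pos: "u \<noteq> 0 \<Longrightarrow> u \<bullet> (X *v u) > 0" for u
    using assms(2) unfolding pos_def_def by blast
  have "continuous_on (sphere 0 1) f"
    unfolding f_def
    apply (intro continuous_intros)
    using X_pos by (metis less_irrefl norm_zero mem_sphere_0 zero_neq_one)
  moreover have "sphere (0 :: real^'n) 1 \<noteq> {}" by simp
  ultimately obtain v where v: "v \<in> sphere 0 1" "\<forall>u\<in>sphere 0 1. f u \<le> f v"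
    using continuous_attains_sup[OF compact_sphere] by blast
  define lam where "lam = f v"
  have v0: "v \<noteq> 0" using v(1) by auto
  have le: "u \<bullet> (B *v u) \<le> lam * (u \<bullet> (X *v u))" for u
  proof (cases "u = 0")
    case False
    have "f ((1 / norm u) *\<^sub>R u) \<le> lam" using v(2) False unfolding lam_def by simp
    moreover have "f ((1 / norm u) *\<^sub>R u) = f u"
      unfolding f_def using False by (simp add: matrix_vector_mult_scaleR power2_eq_square)
    ultimately have "f u \<le> lam" by simp
    then show ?thesis using X_pos[OF False] unfolding f_def by (simp add: divide_le_eq)
  qed simp
  define M where "M = B - lam *\<^sub>R X"
  have M: "M *v u = B *v u - lam *\<^sub>R (X *v u)" for u
    unfolding M_def by (simp add: matrix_vector_mult_diff_rdistrib scaleR_matrix_vector_assoc)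
  have "sym_mat M"
    using assms unfolding M_def sym_mat_def pos_def_def
    by (simp add: transpose_scalar transpose_def vec_eq_iff)
  moreover have "u \<bullet> (M *v u) \<le> 0" for u using le[of u] by (simp add: M inner_diff_right)
  moreover have "v \<bullet> (M *v v) = 0"
    using X_pos[OF v0] by (simp add: M inner_diff_right lam_def f_def)
  ultimately have "M *v v = 0" by (rule nsd_quadratic_form_eq_0_imp_kernel)
  then have "B *v v = lam *\<^sub>R (X *v v)" by (simp add: M)
  from v0 this le show ?thesis by (rule that)
qed

text \<open>If \<open>X D X w' = \<lambda> X w'\<close>, then \<open>w = X w'\<close> satisfies \<open>X D w = \<lambda> w\<close>; pairing the equation
  with \<open>w\<close> gives \<open>2 \<lambda> w\<^sup>T C w = 0\<close>, so the largest generalized eigenvalue is \<open>0\<close>.\<close>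
lemma lyapunov_quadratic_form_nonpos:
  fixes C X D :: "real^'n^'n"
  assumes C: "pos_def C" and X: "pos_def X" and D: "sym_mat D"
    and eq: "C ** X ** D + D ** X ** C = 0"
  shows "u \<bullet> ((X ** D ** X) *v u) \<le> 0"
proof -
  have sX: "sym_mat X" using X by (rule pos_def_sym_mat)
  obtain v lam where v: "v \<noteq> 0" "(X ** D ** X) *v v = lam *\<^sub>R (X *v v)"
    and max: "\<And>u. u \<bullet> ((X ** D ** X) *v u) \<le> lam * (u \<bullet> (X *v u))"
    using generalized_rayleigh_max[OF sym_mat_congruence[OF sX D] X] by blast
  define w where "w = X *v v"
  have w0: "w \<noteq> 0" using pos_def_mult_eq_0[OF X] v(1) unfolding w_def by blast
  have XDw: "X *v (D *v w) = lam *\<^sub>R w"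
    using v(2) unfolding w_def by (simp add: matrix_vector_mul_assoc matrix_mul_assoc)
  have "C *v (X *v (D *v w)) + D *v (X *v (C *v w)) = 0"
    using arg_cong[OF eq, of "\<lambda>M. M *v w"]
    by (simp add: matrix_vector_mult_add_rdistrib matrix_vector_mul_assoc matrix_mul_assoc)
  then have "lam * (w \<bullet> (C *v w)) + w \<bullet> (D *v (X *v (C *v w))) = 0"
    by (metis XDw inner_add_right inner_zero_right matrix_vector_mult_scaleR inner_scaleR_right)
  moreover have "w \<bullet> (D *v (X *v (C *v w))) = lam * (w \<bullet> (C *v w))"
    using sym_mat_inner_commute[OF D] sym_mat_inner_commute[OF sX] by (simp add: XDw)
  moreover have "w \<bullet> (C *v w) > 0" using C w0 unfolding pos_def_def by blast
  ultimately have "lam = 0" by simp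
  then show ?thesis using max by simp
qed

lemma lyapunov_sym_solution_eq_0:
  fixes C X D :: "real^'n^'n"
  assumes C: "pos_def C" and X: "pos_def X" and D: "sym_mat D"
    and eq: "C ** X ** D + D ** X ** C = 0"
  shows "D = 0"
proof -
  have sX: "sym_mat X" using X by (rule pos_def_sym_mat)
  have eq': "C ** X ** (- D) + (- D) ** X ** C = 0"
    using eq by (simp add: matrix_mul_uminus_right matrix_mul_uminus_left) (metis add_eq_0_iff)
  have "u \<bullet> ((X ** D ** X) *v u) = 0" for u
  proof -
    have "u \<bullet> ((X ** (- D) ** X) *v u) \<le> 0"
      by (rule lyapunov_quadratic_form_nonpos[OF C X sym_mat_uminus[OF D] eq'])
    moreover have "(X ** (- D) ** X) *v u = - ((X ** D ** X) *v u)"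
      by (simp add: matrix_mul_uminus_right matrix_mul_uminus_left matrix_vector_mult_def
          vec_eq_iff sum_negf)
    ultimately show ?thesis
      using lyapunov_quadratic_form_nonpos[OF C X D eq, of u] by simp
  qed
  then have "X ** D ** X = 0"
    by (rule sym_mat_eq_0_if_quadratic_form_0[OF sym_mat_congruence[OF sX D]])
  then have "matrix_inv X ** (X ** D ** X) ** matrix_inv X = 0" by simp
  then show ?thesis using pos_def_matrix_inv[OF X] by (metis matrix_mul_assoc matrix_mul_lid matrix_mul_rid)
qed

lemma vecm_inject: "vecm M = vecm N \<longleftrightarrow> M = N"
  unfolding vecm_def by (auto simp: vec_eq_iff)

lemma vecm_add: "vecm (M + N) = vecm M + vecm N"
  by (simp add: vecm_def vec_eq_iff)

lemma vecm_scaleR: "vecm (c *\<^sub>R M) = c *\<^sub>R vecm M"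
  by (simp add: vecm_def vec_eq_iff)

lemma kron_mult_vecm: "kron P Q *v vecm M = vecm (Q ** M ** transpose P)"
proof -
  have "(kron P Q *v vecm M) $ (i, j) = vecm (Q ** M ** transpose P) $ (i, j)" for i j
  proof -
    have "(kron P Q *v vecm M) $ (i, j)
        = (\<Sum>q\<in>UNIV \<times> UNIV. P $ j $ snd q * Q $ i $ fst q * M $ fst q $ snd q)"
      by (simp add: kron_def vecm_def matrix_vector_mult_def UNIV_Times_UNIV)
    also have "\<dots> = (\<Sum>k\<in>UNIV. \<Sum>l\<in>UNIV. P $ j $ l * Q $ i $ k * M $ k $ l)"
      by (simp add: sum.cartesian_product case_prod_beta)
    also have "\<dots> = (\<Sum>l\<in>UNIV. (\<Sum>k\<in>UNIV. Q $ i $ k * M $ k $ l) * P $ j $ l)"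
      by (subst sum.swap) (simp add: sum_distrib_right sum_distrib_left mult_ac)
    also have "\<dots> = vecm (Q ** M ** transpose P) $ (i, j)"
      by (simp add: vecm_def matrix_matrix_mult_def transpose_def)
    finally show ?thesis .
  qed
  then show ?thesis by (simp add: vec_eq_iff)
qed

lemma transpose_constr_mat_mult: "transpose (constr_mat A) *v y = vecm (\<Sum>l\<in>UNIV. y $ l *\<^sub>R A l)"
  by (simp add: constr_mat_def vecm_def vec_eq_iff matrix_vector_mult_def transpose_def
      sum_component mult.commute)

lemma constr_mat_mult_vecm:
  assumes "sym_mat X"
  shows "(constr_mat A *v vecm X) $ l = trace (A l ** X)"
proof -
  have X: "X $ j $ i = X $ i $ j" for i j
    using assms unfolding sym_mat_def by (metis transpose_def vec_lambda_beta)
  have "(constr_mat A *v vecm X) $ l = (\<Sum>q\<in>UNIV \<times> UNIV. A l $ fst q $ snd q * X $ fst q $ snd q)"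
    by (simp add: constr_mat_def vecm_def matrix_vector_mult_def UNIV_Times_UNIV)
  also have "\<dots> = (\<Sum>i\<in>UNIV. \<Sum>j\<in>UNIV. A l $ i $ j * X $ j $ i)"
    by (simp add: sum.cartesian_product case_prod_beta X)
  also have "\<dots> = trace (A l ** X)" by (simp add: trace_def matrix_matrix_mult_def)
  finally show ?thesis .
qed

lemma trace_sum_scaleR_mult:
  "trace ((\<Sum>l\<in>UNIV. y $ l *\<^sub>R A l) ** Y) = (\<Sum>l\<in>UNIV. y $ l * trace (A l ** Y))"
proof -
  have "trace ((\<Sum>l\<in>UNIV. y $ l *\<^sub>R A l) ** Y) =
      (\<Sum>i\<in>UNIV. \<Sum>k\<in>UNIV. \<Sum>l\<in>UNIV. y $ l * (A l $ i $ k * Y $ k $ i))"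
    by (simp add: trace_def matrix_matrix_mult_def sum_component sum_distrib_right mult.assoc)
  also have "\<dots> = (\<Sum>l\<in>UNIV. \<Sum>i\<in>UNIV. \<Sum>k\<in>UNIV. y $ l * (A l $ i $ k * Y $ k $ i))"
    by (subst sum.swap) (rule sum.cong[OF refl], rule sum.swap)
  also have "\<dots> = (\<Sum>l\<in>UNIV. y $ l * trace (A l ** Y))"
    by (simp add: trace_def matrix_matrix_mult_def sum_distrib_left)
  finally show ?thesis .
qed

lemma Gmat_mult_vecm:
  assumes "sym_mat X"
  shows "Gmat C X *v vecm S
    = vecm ((1/2) *\<^sub>R (X ** S ** transpose (matrix_inv C) + matrix_inv C ** S ** X))"
  using assms
  by (simp add: Gmat_def scaleR_matrix_vector_assoc[symmetric] matrix_vector_mult_add_rdistrib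
      kron_mult_vecm vecm_add vecm_scaleR sym_mat_def)

lemma Gmat_fixed_point_eq:
  fixes C X S :: "real^'n^'n"
  assumes symC: "sym_mat C" and C: "pos_def C" and X: "pos_def X" and symS: "sym_mat S"
    and fixed: "Gmat C X *v vecm S = vecm X"
  shows "S = C"
proof -
  define Ci where "Ci = matrix_inv C"
  have X_eq: "X = (1/2) *\<^sub>R (X ** S ** transpose Ci + Ci ** S ** X)"
    using fixed Gmat_mult_vecm[OF pos_def_sym_mat[OF X]] vecm_inject unfolding Ci_def by metis
  have CiC: "Ci ** C = mat 1" "C ** Ci = mat 1" using pos_def_matrix_inv[OF C] unfolding Ci_def by auto
  have CiTC: "transpose Ci ** C = mat 1"
    using CiC symC unfolding sym_mat_def by (metis matrix_transpose_mul transpose_mat)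
  have "C ** X ** C = (1/2) *\<^sub>R (C ** X ** S ** (transpose Ci ** C) + (C ** Ci) ** S ** X ** C)"
    by (subst X_eq) (simp add: matrix_scalar_ac scalar_matrix_assoc[symmetric] matrix_add_ldistrib
        matrix_add_rdistrib matrix_mul_assoc scaleR_add_right)
  then have "2 *\<^sub>R (C ** X ** C) = C ** X ** S + S ** X ** C"
    by (simp add: CiC CiTC)
  then have "C ** X ** (S - C) + (S - C) ** X ** C = 0"
    by (simp add: matrix_diff_ldistrib matrix_diff_rdistrib scaleR_2)
  then have "S - C = 0"
    by (rule lyapunov_sym_solution_eq_0[OF C X sym_mat_diff[OF symS symC]])
  then show ?thesis by simp
qed

lemma sdp_optimal_if_cost_in_span:
  assumes "C = (\<Sum>l\<in>UNIV. y $ l *\<^sub>R A l)" and X: "sdp_feasible A b X"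
  shows "sdp_optimal C A b X"
proof -
  have "trace (C ** Y) = (\<Sum>l\<in>UNIV. y $ l * b $ l)" if "sdp_feasible A b Y" for Y
    using that unfolding assms(1) trace_sum_scaleR_mult sdp_feasible_def by simp
  then show ?thesis using X unfolding sdp_optimal_def by simp
qed

theorem lemma4p4:
  fixes C X :: "real^'n^'n" and A :: "'m::finite \<Rightarrow> real^'n^'n" and b :: "real^'m"
  assumes "sym_mat C" and "\<forall>l. sym_mat (A l)"
    and "pos_def C"
    and "pos_def X"
    and "constr_mat A *v vecm X = b"
    and "v1 C A X = 0"
  shows "sdp_optimal C A b X"
proof -
  define AA where "AA = constr_mat A"
  define y where "y = mp_pinv (AA ** Gmat C X ** transpose AA) *v (AA *v vecm X)"
  define S where "S = (\<Sum>l\<in>UNIV. y $ l *\<^sub>R A l)"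
  have "(Gmat C X ** transpose AA ** mp_pinv (AA ** Gmat C X ** transpose AA) ** AA) *v vecm X
      = vecm X"
    using assms(6) unfolding v1_def AA_def Let_def by simp
  then have "Gmat C X *v (transpose AA *v y) = vecm X"
    unfolding y_def by (simp add: matrix_vector_mul_assoc matrix_mul_assoc)
  then have "Gmat C X *v vecm S = vecm X"
    unfolding S_def AA_def transpose_constr_mat_mult .
  moreover have "sym_mat S"
    unfolding S_def using assms(2) by (simp add: sym_mat_sum_scaleR)
  ultimately have "S = C"
    using Gmat_fixed_point_eq[OF assms(1,3,4)] by blast
  moreover have "sdp_feasible A b X"
    using constr_mat_mult_vecm[OF pos_def_sym_mat[OF assms(4)], of A] pos_def_psd[OF assms(4)]
    unfolding sdp_feasible_def assms(5) by simp
  ultimately show ?thesis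
    unfolding S_def by (rule sdp_optimal_if_cost_in_span[OF sym])
qed

end
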